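(* There is a universal constant $C>0$ such that for every $m\ge0$, every $\Lambda>0$ and every $\psi\in\mathcal H$ lying in the $m$-photon sector with $\|p\psi\|<\infty$ and $(\psi,H_f\psi)<\infty$, \[ \big(p\cdot D^*\psi,\,(p^2+H_f)^{-1}\,p\cdot D^*\psi\big)\le C\Lambda\big(\|p\psi\|^2+(\psi,H_f\psi)\big), \] where $p\cdot D^*=\sum_{j=1}^3 p_jD_j^*$.
   Context: $p=-i\nabla_x$. Hilbert space $\mathcal H = L^2(\mathbb R^3;\mathbb C^2)\otimes\mathcal F_b(L^2(\mathbb R^3;\mathbb C^2))$ with bosonic operators $a_\lambda(k),a^*_\lambda(k)$ ($\lambda=1,2$) obeying the canonical commutation relations; the $m$-photon sector is the subspace of vectors whose Fock component is an $m$-particle state. Polarization vectors $\varepsilon_\lambda(k)\in\mathbb R^3$ with $\{k/|k|,\varepsilon_1(k),\varepsilon_2(k)\}$ orthonormal and $\varepsilon_\lambda(-k)=\pm\varepsilon_\lambda(k)$. $\chi(|k|)=1$ for $|k|\le\Lambda$, $0$ otherwise. $G^\lambda(k)=\frac{\chi(|k|)}{2\pi|k|^{1/2}}\varepsilon_\lambda(k)$, $D(x)=\sum_\lambda\int G^\lambda(k)e^{ik\cdot x}a_\lambda(k)dk$ (a vector of operators) with adjoint $D^*$. $H_f=\sum_\lambda\int|k|a^*_\lambda(k)a_\lambda(k)dk$. *)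

theory Defs
  imports "HOL-Analysis.Analysis"
begin

text \<open>An m-photon vector is a function
  psi sigma L P K, with electron spin sigma in {1,2}, photon polarization labels
  L in {..<m} ->E {1,2}, electron momentum P in R^3 and photon momenta
  K in {..<m} ->E R^3.\<close>

type_synonym state = "nat \<Rightarrow> (nat \<Rightarrow> nat) \<Rightarrow> real^3 \<Rightarrow> (nat \<Rightarrow> real^3) \<Rightarrow> complex"

definition photon_space :: "nat \<Rightarrow> (nat \<Rightarrow> real^3) measure" where
  "photon_space m = PiM {..<m} (\<lambda>_. (lborel :: (real^3) measure))"

definition config_measure :: "nat \<Rightarrow> ((real^3) \<times> (nat \<Rightarrow> real^3)) measure" where
  "config_measure m = (lborel :: (real^3) measure) \<Otimes>\<^sub>M photon_space m"

definition labels :: "nat \<Rightarrow> (nat \<Rightarrow> nat) set" where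
  "labels m = PiE {..<m} (\<lambda>_. {1,2::nat})"

definition sector_sum :: "nat \<Rightarrow> (nat \<Rightarrow> (nat \<Rightarrow> nat) \<Rightarrow> real^3 \<Rightarrow> (nat \<Rightarrow> real^3) \<Rightarrow> ennreal) \<Rightarrow> ennreal" where
  "sector_sum m f = (\<Sum>\<sigma>\<in>{1,2::nat}. \<Sum>L\<in>labels m.
      \<integral>\<^sup>+ z. f \<sigma> L (fst z) (snd z) \<partial>config_measure m)"

definition m_photon_state :: "nat \<Rightarrow> state \<Rightarrow> bool" where
  "m_photon_state m \<psi> \<longleftrightarrow>
     (\<forall>\<sigma>\<in>{1,2}. \<forall>L\<in>labels m. (\<lambda>z. \<psi> \<sigma> L (fst z) (snd z)) \<in> borel_measurable (config_measure m)) \<and>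
     (\<forall>\<sigma>\<in>{1,2}. \<forall>L\<in>labels m. \<forall>P. \<forall>K\<in>space (photon_space m). \<forall>\<pi>. \<pi> permutes {..<m} \<longrightarrow>
        \<psi> \<sigma> (restrict (L \<circ> \<pi>) {..<m}) P (restrict (K \<circ> \<pi>) {..<m}) = \<psi> \<sigma> L P K) \<and>
     sector_sum m (\<lambda>\<sigma> L P K. ennreal ((cmod (\<psi> \<sigma> L P K))\<^sup>2)) < \<infinity>"

definition polarization :: "(nat \<Rightarrow> real^3 \<Rightarrow> real^3) \<Rightarrow> bool" where
  "polarization \<epsilon> \<longleftrightarrow>
     (\<forall>l\<in>{1,2}. \<epsilon> l \<in> borel_measurable borel) \<and>
     (\<forall>k. k \<noteq> 0 \<longrightarrow>
        norm (\<epsilon> 1 k) = 1 \<and> norm (\<epsilon> 2 k) = 1 \<and> \<epsilon> 1 k \<bullet> \<epsilon> 2 k = 0 \<and>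
        \<epsilon> 1 k \<bullet> k = 0 \<and> \<epsilon> 2 k \<bullet> k = 0 \<and>
        (\<forall>l\<in>{1,2}. \<epsilon> l (-k) = \<epsilon> l k \<or> \<epsilon> l (-k) = - \<epsilon> l k))"

definition coupling :: "(nat \<Rightarrow> real^3 \<Rightarrow> real^3) \<Rightarrow> real \<Rightarrow> nat \<Rightarrow> real^3 \<Rightarrow> real^3" where
  "coupling \<epsilon> \<Lambda> l k = ((if norm k \<le> \<Lambda> then 1 else 0) / (2 * pi * sqrt (norm k))) *\<^sub>R \<epsilon> l k"

definition del :: "nat \<Rightarrow> nat \<Rightarrow> (nat \<Rightarrow> 'a) \<Rightarrow> (nat \<Rightarrow> 'a)" where
  "del m i f = restrict (\<lambda>j. if j < i then f j else f (Suc j)) {..<m}"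

text \<open>(p . D^* psi) in momentum representation, an (m+1)-photon vector:
  a^* creates a photon with symmetrization factor (m+1)^(-1/2); the factor
  e^(-i k.x) shifts the electron momentum; p acts afterwards.\<close>
definition pD_star :: "(nat \<Rightarrow> real^3 \<Rightarrow> real^3) \<Rightarrow> real \<Rightarrow> nat \<Rightarrow> state \<Rightarrow> state" where
  "pD_star \<epsilon> \<Lambda> m \<psi> \<sigma> L P K =
     (1 / sqrt (real (Suc m))) *
     (\<Sum>i<Suc m. complex_of_real (P \<bullet> coupling \<epsilon> \<Lambda> (L i) (K i)) *
                 \<psi> \<sigma> (del m i L) (P + K i) (del m i K))"

end

theory Submission
  imports Defs
begin

(* Dropping p^2 from the denominator, Cauchy-Schwarz with weights |k_i| bounds
   |p.D^* psi|^2 / (p^2 + H_f) at a configuration by the sum over the emitted photon i of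
   |P.G(k_i)|^2/|k_i| |psi|^2, divided by m + 1. Transversality of G(k) to k lets P be replaced by
   the electron momentum P + k_i at which psi is evaluated, so after the shift P + k_i -> P every
   term factorizes into the integral of chi(|k|)/|k|^2, which is of order Lambda, times
   the kinetic energy ||p psi||^2; the m + 1 terms cancel the factor 1/(m + 1). *)

section \<open>Pointwise bound\<close>

lemma norm_sum_squared_div_le:
  fixes a :: "'i \<Rightarrow> complex" and w :: "'i \<Rightarrow> real"
  assumes "finite I" and w_nonneg: "\<And>i. i \<in> I \<Longrightarrow> 0 \<le> w i"
    and a_zero: "\<And>i. i \<in> I \<Longrightarrow> w i = 0 \<Longrightarrow> a i = 0"
    and sum_le: "(\<Sum>i\<in>I. w i) \<le> D"
  shows "(cmod (\<Sum>i\<in>I. a i))\<^sup>2 / D \<le> (\<Sum>i\<in>I. (cmod (a i))\<^sup>2 / w i)"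
proof -
  have split: "cmod (a i) = sqrt (w i) * (cmod (a i) / sqrt (w i))" if "i \<in> I" for i
    using w_nonneg[OF that] a_zero[OF that] by (cases "w i = 0") auto
  have "(cmod (\<Sum>i\<in>I. a i))\<^sup>2 \<le> (\<Sum>i\<in>I. cmod (a i))\<^sup>2"
    by (intro power_mono norm_sum) simp
  also have "\<dots> = (\<Sum>i\<in>I. sqrt (w i) * (cmod (a i) / sqrt (w i)))\<^sup>2"
    using split by (simp cong: sum.cong)
  also have "\<dots> \<le> (\<Sum>i\<in>I. (sqrt (w i))\<^sup>2) * (\<Sum>i\<in>I. (cmod (a i) / sqrt (w i))\<^sup>2)"
    by (rule Cauchy_Schwarz_ineq_sum)
  also have "\<dots> = (\<Sum>i\<in>I. w i) * (\<Sum>i\<in>I. (cmod (a i))\<^sup>2 / w i)"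
    using w_nonneg by (simp add: power_divide)
  finally have CS: "(cmod (\<Sum>i\<in>I. a i))\<^sup>2 \<le> (\<Sum>i\<in>I. w i) * (\<Sum>i\<in>I. (cmod (a i))\<^sup>2 / w i)" .
  have "0 \<le> (\<Sum>i\<in>I. (cmod (a i))\<^sup>2 / w i)"
    using w_nonneg by (intro sum_nonneg) auto
  show ?thesis
  proof (cases "D > 0")
    case True
    have "(cmod (\<Sum>i\<in>I. a i))\<^sup>2 \<le> D * (\<Sum>i\<in>I. (cmod (a i))\<^sup>2 / w i)"
      using CS sum_le \<open>0 \<le> (\<Sum>i\<in>I. (cmod (a i))\<^sup>2 / w i)\<close> by (meson mult_right_mono order_trans)
    with True show ?thesis
      by (simp add: pos_divide_le_eq mult.commute)
  next
    case False
    then have "(cmod (\<Sum>i\<in>I. a i))\<^sup>2 / D \<le> 0"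
      by (intro divide_nonneg_nonpos) auto
    with \<open>0 \<le> (\<Sum>i\<in>I. (cmod (a i))\<^sup>2 / w i)\<close> show ?thesis by linarith
  qed
qed

definition cutoff_inverse_square :: "real \<Rightarrow> real^3 \<Rightarrow> real" where
  "cutoff_inverse_square \<Lambda> k = (if norm k \<le> \<Lambda> then 1 else 0) / (norm k)\<^sup>2"

lemma cutoff_inverse_square_nonneg: "0 \<le> cutoff_inverse_square \<Lambda> k"
  by (simp add: cutoff_inverse_square_def)

lemma borel_measurable_cutoff_inverse_square[measurable]:
  "cutoff_inverse_square \<Lambda> \<in> borel_measurable borel"
  unfolding cutoff_inverse_square_def by measurable

lemma coupling_zero: "coupling \<epsilon> \<Lambda> l 0 = 0"
  by (simp add: coupling_def)

lemma coupling_squared_le: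
  assumes "polarization \<epsilon>" and "l \<in> {1,2}"
  shows "(P \<bullet> coupling \<epsilon> \<Lambda> l k)\<^sup>2 / norm k \<le> (norm (P + k))\<^sup>2 * cutoff_inverse_square \<Lambda> k"
proof (cases "k = 0")
  case False
  define c where "c = (if norm k \<le> \<Lambda> then 1 else 0) / (2 * pi * sqrt (norm k))"
  have G: "coupling \<epsilon> \<Lambda> l k = c *\<^sub>R \<epsilon> l k"
    by (simp add: coupling_def c_def)
  have unit: "norm (\<epsilon> l k) = 1" and transversal: "\<epsilon> l k \<bullet> k = 0"
    using assms False unfolding polarization_def by auto
  have "\<bar>P \<bullet> coupling \<epsilon> \<Lambda> l k\<bar> = \<bar>(P + k) \<bullet> coupling \<epsilon> \<Lambda> l k\<bar>"
    using transversal by (simp add: G inner_add_left inner_commute)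
  also have "\<dots> \<le> norm (P + k) * norm (coupling \<epsilon> \<Lambda> l k)"
    by (rule Cauchy_Schwarz_ineq2)
  also have "\<dots> = norm (P + k) * \<bar>c\<bar>"
    by (simp add: G unit)
  finally have "(P \<bullet> coupling \<epsilon> \<Lambda> l k)\<^sup>2 \<le> (norm (P + k))\<^sup>2 * c\<^sup>2"
    by (metis abs_ge_zero power2_abs power_mono power_mult_distrib)
  then have "(P \<bullet> coupling \<epsilon> \<Lambda> l k)\<^sup>2 / norm k \<le> (norm (P + k))\<^sup>2 * (c\<^sup>2 / norm k)"
    by (simp add: divide_right_mono)
  also have "c\<^sup>2 / norm k \<le> cutoff_inverse_square \<Lambda> k"
  proof -
    have "1 \<le> pi\<^sup>2"
      using pi_gt3 by (intro one_le_power) linarith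
    then have "1 \<le> 4 * pi\<^sup>2"
      by linarith
    have "c\<^sup>2 / norm k = (if norm k \<le> \<Lambda> then 1 else 0) / (4 * pi\<^sup>2 * (norm k)\<^sup>2)"
      using False by (simp add: c_def power_divide power_mult_distrib power2_eq_square)
    also have "\<dots> \<le> cutoff_inverse_square \<Lambda> k"
      using \<open>1 \<le> 4 * pi\<^sup>2\<close> False
      by (auto simp: cutoff_inverse_square_def divide_simps mult_le_cancel_right1)
    finally show ?thesis .
  qed
  finally show ?thesis
    by (simp add: mult_left_mono)
qed (simp add: cutoff_inverse_square_def)

lemma pD_star_squared_div_le:
  assumes pol: "polarization \<epsilon>" and L: "\<And>i. i < Suc m \<Longrightarrow> L i \<in> {1,2}"
  shows "(cmod (pD_star \<epsilon> \<Lambda> m \<psi> \<sigma> L P K))\<^sup>2 / ((norm P)\<^sup>2 + (\<Sum>i<Suc m. norm (K i)))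
    \<le> (1 / real (Suc m)) * (\<Sum>i<Suc m. cutoff_inverse_square \<Lambda> (K i) *
          ((norm (P + K i))\<^sup>2 * (cmod (\<psi> \<sigma> (del m i L) (P + K i) (del m i K)))\<^sup>2))"
proof -
  define a where "a i = complex_of_real (P \<bullet> coupling \<epsilon> \<Lambda> (L i) (K i)) *
    \<psi> \<sigma> (del m i L) (P + K i) (del m i K)" for i
  have "(cmod (pD_star \<epsilon> \<Lambda> m \<psi> \<sigma> L P K))\<^sup>2 = (1 / real (Suc m)) * (cmod (\<Sum>i<Suc m. a i))\<^sup>2"
    by (simp add: pD_star_def a_def norm_mult norm_divide power_mult_distrib power_divide
        del: of_nat_Suc sum.lessThan_Suc)
  then have "(cmod (pD_star \<epsilon> \<Lambda> m \<psi> \<sigma> L P K))\<^sup>2 / ((norm P)\<^sup>2 + (\<Sum>i<Suc m. norm (K i)))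
     = (1 / real (Suc m)) * ((cmod (\<Sum>i<Suc m. a i))\<^sup>2 / ((norm P)\<^sup>2 + (\<Sum>i<Suc m. norm (K i))))"
    by simp
  also have "\<dots> \<le> (1 / real (Suc m)) * (\<Sum>i<Suc m. (cmod (a i))\<^sup>2 / norm (K i))"
    by (intro mult_left_mono norm_sum_squared_div_le) (auto simp: a_def coupling_zero)
  also have "\<dots> \<le> (1 / real (Suc m)) * (\<Sum>i<Suc m. cutoff_inverse_square \<Lambda> (K i) *
          ((norm (P + K i))\<^sup>2 * (cmod (\<psi> \<sigma> (del m i L) (P + K i) (del m i K)))\<^sup>2))"
  proof (intro mult_left_mono sum_mono)
    fix i assume "i \<in> {..<Suc m}"
    then have "(P \<bullet> coupling \<epsilon> \<Lambda> (L i) (K i))\<^sup>2 / norm (K i)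
        \<le> (norm (P + K i))\<^sup>2 * cutoff_inverse_square \<Lambda> (K i)"
      using L by (intro coupling_squared_le pol) auto
    then have "(P \<bullet> coupling \<epsilon> \<Lambda> (L i) (K i))\<^sup>2 / norm (K i) * (cmod (\<psi> \<sigma> (del m i L) (P + K i) (del m i K)))\<^sup>2
        \<le> (norm (P + K i))\<^sup>2 * cutoff_inverse_square \<Lambda> (K i) * (cmod (\<psi> \<sigma> (del m i L) (P + K i) (del m i K)))\<^sup>2"
      by (rule mult_right_mono) simp
    then show "(cmod (a i))\<^sup>2 / norm (K i) \<le> cutoff_inverse_square \<Lambda> (K i) *
        ((norm (P + K i))\<^sup>2 * (cmod (\<psi> \<sigma> (del m i L) (P + K i) (del m i K)))\<^sup>2)"
      unfolding a_def norm_mult power_mult_distrib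
      by (simp add: field_split_simps ac_simps)
  qed simp
  finally show ?thesis .
qed

lemma ennreal_pD_star_squared_div_le:
  assumes pol: "polarization \<epsilon>" and L: "L \<in> labels (Suc m)"
  shows "ennreal ((cmod (pD_star \<epsilon> \<Lambda> m \<psi> \<sigma> L P K))\<^sup>2 / ((norm P)\<^sup>2 + (\<Sum>i<Suc m. norm (K i))))
    \<le> ennreal (1 / real (Suc m)) * (\<Sum>i<Suc m. ennreal (cutoff_inverse_square \<Lambda> (K i)) *
          ennreal ((norm (P + K i))\<^sup>2 * (cmod (\<psi> \<sigma> (del m i L) (P + K i) (del m i K)))\<^sup>2))"
proof -
  let ?S = "\<Sum>i<Suc m. cutoff_inverse_square \<Lambda> (K i) *
    ((norm (P + K i))\<^sup>2 * (cmod (\<psi> \<sigma> (del m i L) (P + K i) (del m i K)))\<^sup>2)"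
  have "L i \<in> {1,2}" if "i < Suc m" for i
    using L that by (auto simp: labels_def)
  then have "ennreal ((cmod (pD_star \<epsilon> \<Lambda> m \<psi> \<sigma> L P K))\<^sup>2 / ((norm P)\<^sup>2 + (\<Sum>i<Suc m. norm (K i))))
      \<le> ennreal (1 / real (Suc m) * ?S)"
    by (intro ennreal_leI pD_star_squared_div_le pol)
  also have "\<dots> = ennreal (1 / real (Suc m)) * ennreal ?S"
    by (intro ennreal_mult sum_nonneg mult_nonneg_nonneg cutoff_inverse_square_nonneg) auto
  also have "ennreal ?S = (\<Sum>i<Suc m. ennreal (cutoff_inverse_square \<Lambda> (K i)) *
      ennreal ((norm (P + K i))\<^sup>2 * (cmod (\<psi> \<sigma> (del m i L) (P + K i) (del m i K)))\<^sup>2))"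
    using cutoff_inverse_square_nonneg by (simp add: sum_ennreal[symmetric] ennreal_mult del: sum.lessThan_Suc)
  finally show ?thesis .
qed

section \<open>Integrability of the coupling\<close>

lemma powr_third_cube: "0 < x \<Longrightarrow> (x powr (a / 3)) ^ 3 = x powr a"
  for x :: real
  by (simp add: powr_realpow[symmetric] powr_powr)

(* 1/|k|^2 <= prod_b |k_b|^(-2/3) because |k_b| <= |k|. The value infinity at t = 0 covers the
   coordinate hyperplanes, where 0 powr (-2/3) = 0 would break the bound. *)
definition axis_majorant :: "real \<Rightarrow> real \<Rightarrow> ennreal" where
  "axis_majorant \<Lambda> t = (if t = 0 then \<infinity> else ennreal (if \<bar>t\<bar> \<le> \<Lambda> then \<bar>t\<bar> powr (-2/3) else 0))"

lemma borel_measurable_axis_majorant[measurable]: "axis_majorant \<Lambda> \<in> borel_measurable borel"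
  unfolding axis_majorant_def by measurable

lemma cutoff_inverse_square_le_prod_axis_majorant:
  "ennreal (cutoff_inverse_square \<Lambda> k) \<le> (\<Prod>b\<in>Basis. axis_majorant \<Lambda> (k \<bullet> b))"
proof (cases "k \<noteq> 0 \<and> norm k \<le> \<Lambda>")
  case True
  then have bounded: "\<bar>k \<bullet> b\<bar> \<le> \<Lambda>" if "b \<in> Basis" for b
    using Basis_le_norm[OF that, of k] by simp
  show ?thesis
  proof (cases "\<exists>b\<in>Basis. k \<bullet> b = 0")
    case True
    then have "(\<Prod>b\<in>Basis. axis_majorant \<Lambda> (k \<bullet> b)) = \<infinity>"
      using bounded by (auto simp: ennreal_prod_eq_top axis_majorant_def)
    then show ?thesis by simp
  next
    case False
    have "cutoff_inverse_square \<Lambda> k = norm k powr (-2)"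
      using True by (simp add: cutoff_inverse_square_def powr_neg_numeral)
    also have "\<dots> = (norm k powr (-2/3)) ^ 3"
      using True powr_third_cube[of "norm k" "-2"] by simp
    also have "\<dots> = (\<Prod>b\<in>(Basis :: (real^3) set). norm k powr (-2/3))"
      by simp
    also have "\<dots> \<le> (\<Prod>b\<in>Basis. \<bar>k \<bullet> b\<bar> powr (-2/3))"
      using False by (intro prod_mono) (auto intro: powr_mono2' Basis_le_norm)
    finally show ?thesis
      using False bounded
      by (simp add: axis_majorant_def prod_ennreal ennreal_leI cong: prod.cong)
  qed
qed (auto simp: cutoff_inverse_square_def)

lemma nn_integral_axis_majorant_le:
  assumes "0 < \<Lambda>"
  shows "(\<integral>\<^sup>+t. axis_majorant \<Lambda> t \<partial>lborel) \<le> ennreal (6 * \<Lambda> powr (1/3))"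
proof -
  define g where "g t = ennreal (t powr (-2/3)) * indicator {0..\<Lambda>} t" for t :: real
  have [measurable]: "g \<in> borel_measurable borel"
    unfolding g_def by measurable
  have half: "(\<integral>\<^sup>+t. g t \<partial>lborel) = ennreal (3 * \<Lambda> powr (1/3))"
    using nn_integral_has_integral_lebesgue'[OF _ has_integral_powr_from_0[of "-2/3" \<Lambda>]] assms
    by (simp add: g_def)
  have "AE t in lborel. axis_majorant \<Lambda> t \<le> g t + g (- t)"
    using AE_lborel_singleton[of 0]
    by eventually_elim (auto simp: axis_majorant_def g_def indicator_def)
  then have "(\<integral>\<^sup>+t. axis_majorant \<Lambda> t \<partial>lborel) \<le> (\<integral>\<^sup>+t. g t + g (- t) \<partial>lborel)"
    by (rule nn_integral_mono_AE)
  also have "\<dots> = (\<integral>\<^sup>+t. g t \<partial>lborel) + (\<integral>\<^sup>+t. g (- t) \<partial>lborel)"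
    by (rule nn_integral_add) auto
  also have "(\<integral>\<^sup>+t. g (- t) \<partial>lborel) = (\<integral>\<^sup>+t. g t \<partial>lborel)"
    using nn_integral_real_affine[of g "-1" 0] by simp
  finally show ?thesis
    using assms by (simp add: half ennreal_plus[symmetric] del: ennreal_plus)
qed

lemma nn_integral_cutoff_inverse_square_le:
  assumes "0 < \<Lambda>"
  shows "(\<integral>\<^sup>+k. ennreal (cutoff_inverse_square \<Lambda> k) \<partial>lborel) \<le> ennreal (216 * \<Lambda>)"
proof -
  have "(\<integral>\<^sup>+k. ennreal (cutoff_inverse_square \<Lambda> k) \<partial>lborel)
      \<le> (\<integral>\<^sup>+k. (\<Prod>b\<in>Basis. axis_majorant \<Lambda> ((k :: real^3) \<bullet> b)) \<partial>lborel)"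
    by (intro nn_integral_mono cutoff_inverse_square_le_prod_axis_majorant)
  also have "\<dots> = (\<integral>\<^sup>+t. axis_majorant \<Lambda> t \<partial>lborel) ^ 3"
    by (subst nn_integral_lborel_prod) auto
  also have "\<dots> \<le> (ennreal (6 * \<Lambda> powr (1/3))) ^ 3"
    by (intro power_mono nn_integral_axis_majorant_le assms) simp
  also have "\<dots> = ennreal ((6 * \<Lambda> powr (1/3)) ^ 3)"
    by (simp add: ennreal_power)
  also have "(6 * \<Lambda> powr (1/3)) ^ 3 = 216 * \<Lambda>"
    using assms powr_third_cube[OF assms, of 1] by (simp add: power_mult_distrib)
  finally show ?thesis .
qed

section \<open>Inserting and deleting a photon\<close>

definition skip :: "nat \<Rightarrow> nat \<Rightarrow> nat" where
  "skip i j = (if j < i then j else Suc j)"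

definition ins :: "nat \<Rightarrow> nat \<Rightarrow> 'a \<Rightarrow> (nat \<Rightarrow> 'a) \<Rightarrow> (nat \<Rightarrow> 'a)" where
  "ins m i a f = (\<lambda>j\<in>{..<Suc m}. if j < i then f j else if j = i then a else f (j - 1))"

lemma ins_at: "i \<le> m \<Longrightarrow> ins m i a f i = a"
  by (simp add: ins_def)

lemma ins_skip: "j < m \<Longrightarrow> ins m i a f (skip i j) = f j"
  by (simp add: ins_def skip_def)

lemma del_ins: "i \<le> m \<Longrightarrow> del m i (ins m i a f) = restrict f {..<m}"
  by (auto simp: del_def ins_def)

lemma ins_del: "i \<le> m \<Longrightarrow> ins m i (g i) (del m i g) = restrict g {..<Suc m}"
  by (auto simp: del_def ins_def fun_eq_iff)

lemma lessThan_Suc_eq_insert_skip: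
  assumes "i \<le> m"
  shows "{..<Suc m} = insert i (skip i ` {..<m})"
proof (intro set_eqI iffI)
  fix j assume j: "j \<in> {..<Suc m}"
  consider "j < i" | "j = i" | "i < j" by linarith
  then show "j \<in> insert i (skip i ` {..<m})"
  proof cases
    case 1
    with assms show ?thesis by (intro insertI2 rev_image_eqI[of j]) (auto simp: skip_def)
  next
    case 3
    with j show ?thesis by (intro insertI2 rev_image_eqI[of "j - 1"]) (auto simp: skip_def)
  qed simp
qed (use assms in \<open>auto simp: skip_def\<close>)

lemma ins_PiE_iff:
  assumes "i \<le> m" and "f \<in> extensional {..<m}"
  shows "ins m i a f \<in> PiE {..<Suc m} A \<longleftrightarrow>
    a \<in> A i \<and> f \<in> PiE {..<m} (\<lambda>j. A (skip i j))"
proof -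
  have "ins m i a f \<in> extensional {..<Suc m}"
    by (simp add: ins_def)
  then have "ins m i a f \<in> PiE {..<Suc m} A \<longleftrightarrow> (\<forall>j\<in>{..<Suc m}. ins m i a f j \<in> A j)"
    by (simp add: PiE_iff)
  also have "\<dots> \<longleftrightarrow> a \<in> A i \<and> (\<forall>j\<in>{..<m}. f j \<in> A (skip i j))"
    unfolding lessThan_Suc_eq_insert_skip[OF assms(1)] ball_simps(7,9)
    using assms(1) by (simp add: ins_at ins_skip)
  finally show ?thesis
    using assms(2) by (simp add: PiE_iff)
qed

lemma del_PiE: "g \<in> PiE {..<Suc m} (\<lambda>_. S) \<Longrightarrow> del m i g \<in> PiE {..<m} (\<lambda>_. S)"
  by (auto simp: del_def PiE_def Pi_def)

lemma del_labels: "L \<in> labels (Suc m) \<Longrightarrow> del m i L \<in> labels m"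
  unfolding labels_def by (rule del_PiE)

lemma bij_betw_ins_PiE:
  assumes "i \<le> m"
  shows "bij_betw (\<lambda>(a, f). ins m i a f) (S \<times> PiE {..<m} (\<lambda>_. S)) (PiE {..<Suc m} (\<lambda>_. S))"
proof (rule bij_betw_byWitness[where f' = "\<lambda>g. (g i, del m i g)"])
  show "\<forall>x\<in>S \<times> PiE {..<m} (\<lambda>_. S). (\<lambda>g. (g i, del m i g)) ((\<lambda>(a, f). ins m i a f) x) = x"
    using assms by (auto simp: ins_at del_ins PiE_restrict)
  show "\<forall>g\<in>PiE {..<Suc m} (\<lambda>_. S). (\<lambda>(a, f). ins m i a f) (g i, del m i g) = g"
    using assms by (auto simp: ins_del PiE_restrict)
  show "(\<lambda>(a, f). ins m i a f) ` (S \<times> PiE {..<m} (\<lambda>_. S)) \<subseteq> PiE {..<Suc m} (\<lambda>_. S)"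
  proof clarify
    fix a f assume "a \<in> S" and f: "f \<in> PiE {..<m} (\<lambda>_. S)"
    moreover have "f \<in> extensional {..<m}"
      using f by (simp add: PiE_iff)
    ultimately show "ins m i a f \<in> PiE {..<Suc m} (\<lambda>_. S)"
      using ins_PiE_iff[OF assms \<open>f \<in> extensional {..<m}\<close>, of a "\<lambda>_. S"] by simp
  qed
  show "(\<lambda>g. (g i, del m i g)) ` PiE {..<Suc m} (\<lambda>_. S) \<subseteq> S \<times> PiE {..<m} (\<lambda>_. S)"
  proof
    fix y assume "y \<in> (\<lambda>g. (g i, del m i g)) ` PiE {..<Suc m} (\<lambda>_. S)"
    then obtain g where g: "g \<in> PiE {..<Suc m} (\<lambda>_. S)" and y: "y = (g i, del m i g)"
      by blast
    have "g i \<in> S"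
      using PiE_mem[OF g] assms by simp
    with del_PiE[OF g] show "y \<in> S \<times> PiE {..<m} (\<lambda>_. S)"
      using y by simp
  qed
qed

lemma sum_labels_del:
  fixes F :: "(nat \<Rightarrow> nat) \<Rightarrow> 'a::comm_semiring_1"
  assumes "i \<le> m"
  shows "(\<Sum>L\<in>labels (Suc m). F (del m i L)) = 2 * (\<Sum>L\<in>labels m. F L)"
proof -
  have "(\<Sum>L\<in>labels (Suc m). F (del m i L))
      = (\<Sum>x\<in>{1,2::nat} \<times> labels m. F (del m i ((\<lambda>(a, f). ins m i a f) x)))"
    unfolding labels_def by (rule sum.reindex_bij_betw[OF bij_betw_ins_PiE[OF assms], symmetric])
  also have "\<dots> = (\<Sum>x\<in>{1,2::nat} \<times> labels m. F (snd x))"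
  proof (rule sum.cong)
    fix x assume x: "x \<in> {1,2::nat} \<times> labels m"
    obtain a f where x_eq: "x = (a, f)" by fastforce
    have "f \<in> labels m"
      using x x_eq by simp
    then have "restrict f {..<m} = f"
      unfolding labels_def by (rule PiE_restrict)
    then show "F (del m i ((\<lambda>(a, f). ins m i a f) x)) = F (snd x)"
      using assms x_eq by (simp add: del_ins)
  qed simp
  also have "\<dots> = (\<Sum>a\<in>{1,2::nat}. \<Sum>L\<in>labels m. F L)"
    by (simp add: sum.cartesian_product' case_prod_beta)
  also have "\<dots> = 2 * (\<Sum>L\<in>labels m. F L)"
    by (simp add: mult_2)
  finally show ?thesis .
qed

section \<open>Integration over photon momenta\<close>

interpretation photon: product_sigma_finite "\<lambda>_::nat. (lborel :: (real^3) measure)"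
  by (simp add: product_sigma_finite_def lborel.sigma_finite_measure_axioms)

lemma sigma_finite_photon_space: "sigma_finite_measure (photon_space m)"
  unfolding photon_space_def by (rule photon.sigma_finite) simp

lemma space_photon_space: "space (photon_space m) = PiE {..<m} (\<lambda>_. UNIV)"
  by (simp add: photon_space_def space_PiM)

lemma measurable_photon_component[measurable]:
  "i < m \<Longrightarrow> (\<lambda>K. K i) \<in> borel_measurable (photon_space m)"
  unfolding photon_space_def by (simp add: measurable_component_singleton)

lemma measurable_del: "del m i \<in> measurable (photon_space (Suc m)) (photon_space m)"
  unfolding del_def photon_space_def
proof (rule measurable_restrict)
  fix j assume "j \<in> {..<m}"
  then show "(\<lambda>K. if j < i then K j else K (Suc j)) \<in> measurable (Pi\<^sub>M {..<Suc m} (\<lambda>_. lborel)) lborel"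
    by (cases "j < i") (simp_all add: measurable_component_singleton)
qed

lemma measurable_ins:
  assumes "i \<le> m"
  shows "(\<lambda>z. ins m i (fst z) (snd z)) \<in> measurable (lborel \<Otimes>\<^sub>M photon_space m) (photon_space (Suc m))"
  unfolding ins_def photon_space_def
proof (rule measurable_restrict)
  fix j assume "j \<in> {..<Suc m}"
  then consider "j < i" "j < m" | "j = i" | "i < j" "j - 1 < m"
    using assms by fastforce
  then show "(\<lambda>z. if j < i then snd z j else if j = i then fst z else snd z (j - 1))
      \<in> measurable (lborel \<Otimes>\<^sub>M Pi\<^sub>M {..<m} (\<lambda>_. lborel)) lborel"
    by cases (simp_all add: measurable_compose[OF measurable_snd measurable_component_singleton])
qed

lemma prod_lessThan_Suc_skip:
  fixes g :: "nat \<Rightarrow> 'a::comm_monoid_mult"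
  assumes "i \<le> m"
  shows "(\<Prod>j<Suc m. g j) = g i * (\<Prod>j<m. g (skip i j))"
proof -
  have inj: "inj_on (skip i) {..<m}"
    by (auto simp: inj_on_def skip_def split: if_splits)
  have "(\<Prod>j<Suc m. g j) = g i * (\<Prod>j\<in>skip i ` {..<m}. g j)"
    unfolding lessThan_Suc_eq_insert_skip[OF assms] by (rule prod.insert) (auto simp: skip_def)
  also have "(\<Prod>j\<in>skip i ` {..<m}. g j) = (\<Prod>j<m. g (skip i j))"
    by (rule prod.reindex[OF inj, unfolded comp_def])
  finally show ?thesis .
qed

lemma vimage_ins_PiE:
  assumes "i \<le> m"
  shows "(\<lambda>z. ins m i (fst z) (snd z)) -` PiE {..<Suc m} A \<inter> (UNIV \<times> PiE {..<m} (\<lambda>_. UNIV))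
    = A i \<times> PiE {..<m} (\<lambda>j. A (skip i j))"
proof (intro set_eqI)
  fix z :: "'a \<times> (nat \<Rightarrow> 'a)"
  have "z \<in> (\<lambda>z. ins m i (fst z) (snd z)) -` PiE {..<Suc m} A \<inter> (UNIV \<times> PiE {..<m} (\<lambda>_. UNIV))
      \<longleftrightarrow> snd z \<in> extensional {..<m} \<and> ins m i (fst z) (snd z) \<in> PiE {..<Suc m} A"
    by (cases z) (auto simp: PiE_def)
  also have "\<dots> \<longleftrightarrow> snd z \<in> extensional {..<m} \<and> fst z \<in> A i \<and> snd z \<in> PiE {..<m} (\<lambda>j. A (skip i j))"
    using ins_PiE_iff[OF assms, of "snd z" "fst z" A] by blast
  also have "\<dots> \<longleftrightarrow> z \<in> A i \<times> PiE {..<m} (\<lambda>j. A (skip i j))"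
    by (cases z) (auto simp: PiE_iff)
  finally show "z \<in> (\<lambda>z. ins m i (fst z) (snd z)) -` PiE {..<Suc m} A \<inter> (UNIV \<times> PiE {..<m} (\<lambda>_. UNIV))
      \<longleftrightarrow> z \<in> A i \<times> PiE {..<m} (\<lambda>j. A (skip i j))" .
qed

lemma distr_ins_photon_space:
  assumes "i \<le> m"
  shows "distr (lborel \<Otimes>\<^sub>M photon_space m) (photon_space (Suc m)) (\<lambda>z. ins m i (fst z) (snd z))
    = photon_space (Suc m)"
proof -
  have "distr (lborel \<Otimes>\<^sub>M Pi\<^sub>M {..<m} (\<lambda>_. lborel)) (Pi\<^sub>M {..<Suc m} (\<lambda>_. lborel))
      (\<lambda>z. ins m i (fst z) (snd z)) = Pi\<^sub>M {..<Suc m} (\<lambda>_. lborel :: (real^3) measure)"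
  proof (rule photon.PiM_eqI)
    fix A assume A: "\<And>j. j \<in> {..<Suc m} \<Longrightarrow> A j \<in> sets (lborel :: (real^3) measure)"
    have skip_less: "skip i j < Suc m" if "j < m" for j
      using that by (simp add: skip_def)
    have preimage: "(\<lambda>z. ins m i (fst z) (snd z)) -` PiE {..<Suc m} A
        \<inter> space (lborel \<Otimes>\<^sub>M Pi\<^sub>M {..<m} (\<lambda>_. lborel)) = A i \<times> PiE {..<m} (\<lambda>j. A (skip i j))"
      using vimage_ins_PiE[OF assms] by (simp add: space_pair_measure space_PiM)
    have "emeasure (distr (lborel \<Otimes>\<^sub>M Pi\<^sub>M {..<m} (\<lambda>_. lborel)) (Pi\<^sub>M {..<Suc m} (\<lambda>_. lborel))
        (\<lambda>z. ins m i (fst z) (snd z))) (PiE {..<Suc m} A)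
      = emeasure (lborel \<Otimes>\<^sub>M Pi\<^sub>M {..<m} (\<lambda>_. lborel)) (A i \<times> PiE {..<m} (\<lambda>j. A (skip i j)))"
      using A measurable_ins[OF assms] unfolding preimage[symmetric] photon_space_def
      by (intro emeasure_distr) (auto intro: sets_PiM_I_finite)
    also have "\<dots> = emeasure lborel (A i) * emeasure (Pi\<^sub>M {..<m} (\<lambda>_. lborel)) (PiE {..<m} (\<lambda>j. A (skip i j)))"
      using A assms skip_less sigma_finite_photon_space[of m] unfolding photon_space_def
      by (intro sigma_finite_measure.emeasure_pair_measure_Times) (auto intro: sets_PiM_I_finite)
    also have "emeasure (Pi\<^sub>M {..<m} (\<lambda>_. lborel)) (PiE {..<m} (\<lambda>j. A (skip i j)))
        = (\<Prod>j<m. emeasure lborel (A (skip i j)))"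
      using A skip_less by (intro photon.emeasure_PiM) auto
    also have "emeasure lborel (A i) * (\<Prod>j<m. emeasure lborel (A (skip i j)))
        = (\<Prod>j<Suc m. emeasure lborel (A j))"
      by (rule prod_lessThan_Suc_skip[OF assms, symmetric])
    finally show "emeasure (distr (lborel \<Otimes>\<^sub>M Pi\<^sub>M {..<m} (\<lambda>_. lborel)) (Pi\<^sub>M {..<Suc m} (\<lambda>_. lborel))
        (\<lambda>z. ins m i (fst z) (snd z))) (PiE {..<Suc m} A) = (\<Prod>j\<in>{..<Suc m}. emeasure lborel (A j))" .
  qed simp_all
  then show ?thesis
    by (simp add: photon_space_def)
qed

lemma nn_integral_photon_space_Suc:
  fixes f :: "real^3 \<Rightarrow> (nat \<Rightarrow> real^3) \<Rightarrow> ennreal"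
  assumes "i \<le> m" and [measurable]: "(\<lambda>z. f (fst z) (snd z)) \<in> borel_measurable (lborel \<Otimes>\<^sub>M photon_space m)"
  shows "(\<integral>\<^sup>+K. f (K i) (del m i K) \<partial>photon_space (Suc m)) = (\<integral>\<^sup>+k. \<integral>\<^sup>+K. f k K \<partial>photon_space m \<partial>lborel)"
proof -
  interpret sigma_finite_measure "photon_space m"
    by (rule sigma_finite_photon_space)
  have [measurable]: "(\<lambda>z. ins m i (fst z) (snd z)) \<in> measurable (lborel \<Otimes>\<^sub>M photon_space m) (photon_space (Suc m))"
    using assms(1) by (rule measurable_ins)
  have i: "i < Suc m"
    using assms(1) by simp
  have "(\<integral>\<^sup>+K. f (K i) (del m i K) \<partial>photon_space (Suc m))
      = (\<integral>\<^sup>+z. f (ins m i (fst z) (snd z) i) (del m i (ins m i (fst z) (snd z))) \<partial>(lborel \<Otimes>\<^sub>M photon_space m))"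
  proof -
    have "(\<lambda>K. (K i, del m i K)) \<in> measurable (photon_space (Suc m)) (lborel \<Otimes>\<^sub>M photon_space m)"
      using i by (intro measurable_Pair measurable_del) (simp add: measurable_lborel2)
    from measurable_compose[OF this assms(2)]
    have "(\<lambda>K. f (K i) (del m i K)) \<in> borel_measurable (photon_space (Suc m))"
      by simp
    then show ?thesis
      by (subst distr_ins_photon_space[OF assms(1), symmetric]) (simp add: nn_integral_distr)
  qed
  also have "\<dots> = (\<integral>\<^sup>+z. f (fst z) (snd z) \<partial>(lborel \<Otimes>\<^sub>M photon_space m))"
  proof (rule nn_integral_cong)
    fix z :: "(real^3) \<times> (nat \<Rightarrow> real^3)"
    assume "z \<in> space (lborel \<Otimes>\<^sub>M photon_space m)"
    then have "snd z \<in> PiE {..<m} (\<lambda>_. UNIV)"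
      by (auto simp: space_pair_measure space_photon_space)
    then have "restrict (snd z) {..<m} = snd z"
      by (rule PiE_restrict)
    with assms(1) show "f (ins m i (fst z) (snd z) i) (del m i (ins m i (fst z) (snd z))) = f (fst z) (snd z)"
      by (simp add: ins_at del_ins)
  qed
  also have "\<dots> = (\<integral>\<^sup>+k. \<integral>\<^sup>+K. f k K \<partial>photon_space m \<partial>lborel)"
    using nn_integral_fst[OF assms(2)] by simp
  finally show ?thesis .
qed

lemma nn_integral_lborel_translate:
  fixes c :: "'a::euclidean_space"
  assumes "f \<in> borel_measurable borel"
  shows "(\<integral>\<^sup>+x. f (x + c) \<partial>lborel) = (\<integral>\<^sup>+x. f x \<partial>lborel)"
  using assms
  by (subst (2) lborel_distr_plus[symmetric, of c]) (simp add: nn_integral_distr add.commute)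

lemma borel_measurable_nn_integral_photon_space[measurable (raw)]:
  "case_prod f \<in> borel_measurable (N \<Otimes>\<^sub>M photon_space m)
    \<Longrightarrow> (\<lambda>x. \<integral>\<^sup>+y. f x y \<partial>photon_space m) \<in> borel_measurable N"
  by (rule sigma_finite_measure.borel_measurable_nn_integral[OF sigma_finite_photon_space])

lemma measurable_compose3:
  assumes "(\<lambda>x. f (fst x) (fst (snd x)) (snd (snd x))) \<in> borel_measurable (M1 \<Otimes>\<^sub>M (M2 \<Otimes>\<^sub>M M3))"
    and "(\<lambda>z. (a z, b z, c z)) \<in> measurable N (M1 \<Otimes>\<^sub>M (M2 \<Otimes>\<^sub>M M3))"
  shows "(\<lambda>z. f (a z) (b z) (c z)) \<in> borel_measurable N"
  using measurable_compose[OF assms(2,1)] by simp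

lemma measurable_emission:
  fixes f :: "real^3 \<Rightarrow> real^3 \<Rightarrow> (nat \<Rightarrow> real^3) \<Rightarrow> ennreal"
  assumes "i \<le> m"
    and f: "(\<lambda>x. f (fst x) (fst (snd x)) (snd (snd x))) \<in> borel_measurable (lborel \<Otimes>\<^sub>M config_measure m)"
  shows "(\<lambda>z. f (snd z i) (fst z + snd z i) (del m i (snd z))) \<in> borel_measurable (config_measure (Suc m))"
  unfolding config_measure_def
proof (rule measurable_compose3[OF f[unfolded config_measure_def]])
  have "(\<lambda>K. K i) \<in> borel_measurable (photon_space (Suc m))"
    using assms(1) by (intro measurable_photon_component) simp
  then have [measurable]: "(\<lambda>z. snd z i) \<in> borel_measurable (lborel \<Otimes>\<^sub>M photon_space (Suc m))"
    by (rule measurable_compose[OF measurable_snd])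
  have "(\<lambda>z. del m i (snd z)) \<in> measurable (lborel \<Otimes>\<^sub>M photon_space (Suc m)) (photon_space m)"
    by (rule measurable_compose[OF measurable_snd measurable_del])
  then show "(\<lambda>z. (snd z i, fst z + snd z i, del m i (snd z)))
      \<in> measurable (lborel \<Otimes>\<^sub>M photon_space (Suc m)) (lborel \<Otimes>\<^sub>M (lborel \<Otimes>\<^sub>M photon_space m))"
    by (intro measurable_Pair) (simp_all add: measurable_lborel2)
qed

lemma nn_integral_config_shift:
  fixes f :: "real^3 \<Rightarrow> real^3 \<Rightarrow> (nat \<Rightarrow> real^3) \<Rightarrow> ennreal"
  assumes "i \<le> m"
    and f: "(\<lambda>x. f (fst x) (fst (snd x)) (snd (snd x))) \<in> borel_measurable (lborel \<Otimes>\<^sub>M config_measure m)"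
  shows "(\<integral>\<^sup>+z. f (snd z i) (fst z + snd z i) (del m i (snd z)) \<partial>config_measure (Suc m))
    = (\<integral>\<^sup>+k. \<integral>\<^sup>+z. f k (fst z) (snd z) \<partial>config_measure m \<partial>lborel)"
proof -
  interpret photon_Suc: sigma_finite_measure "photon_space (Suc m)"
    by (rule sigma_finite_photon_space)
  interpret photon_m: sigma_finite_measure "photon_space m"
    by (rule sigma_finite_photon_space)
  note f_compose = measurable_compose3[OF f[unfolded config_measure_def]]
  have measurable_shifted[measurable]: "(\<lambda>x. f (snd (fst x)) (fst (fst x) + snd (fst x)) (snd x))
      \<in> borel_measurable ((lborel \<Otimes>\<^sub>M lborel) \<Otimes>\<^sub>M photon_space m)"
    and measurable_slice[measurable]:
      "(\<lambda>x. f k (fst x) (snd x)) \<in> borel_measurable (lborel \<Otimes>\<^sub>M photon_space m)" for k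
    by (rule f_compose, measurable)+
  have "(\<integral>\<^sup>+z. f (snd z i) (fst z + snd z i) (del m i (snd z)) \<partial>config_measure (Suc m))
      = (\<integral>\<^sup>+P. \<integral>\<^sup>+K. f (K i) (P + K i) (del m i K) \<partial>photon_space (Suc m) \<partial>lborel)"
    using photon_Suc.nn_integral_fst[OF measurable_emission[OF assms, unfolded config_measure_def]]
    by (simp add: config_measure_def)
  also have "\<dots> = (\<integral>\<^sup>+P. \<integral>\<^sup>+k. \<integral>\<^sup>+K. f k (P + k) K \<partial>photon_space m \<partial>lborel \<partial>lborel)"
    using assms(1) by (intro nn_integral_cong nn_integral_photon_space_Suc f_compose) measurable
  also have "\<dots> = (\<integral>\<^sup>+k. \<integral>\<^sup>+P. \<integral>\<^sup>+K. f k (P + k) K \<partial>photon_space m \<partial>lborel \<partial>lborel)"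
    by (intro lborel_pair.Fubini'[symmetric]) measurable
  also have "\<dots> = (\<integral>\<^sup>+k. \<integral>\<^sup>+P. \<integral>\<^sup>+K. f k P K \<partial>photon_space m \<partial>lborel \<partial>lborel)"
    by (rule nn_integral_cong, rule nn_integral_lborel_translate) measurable
  also have "\<dots> = (\<integral>\<^sup>+k. \<integral>\<^sup>+z. f k (fst z) (snd z) \<partial>config_measure m \<partial>lborel)"
    unfolding config_measure_def
    using photon_m.nn_integral_fst[OF measurable_slice] by (intro nn_integral_cong) simp
  finally show ?thesis .
qed

lemma measurable_emission_mult:
  fixes w :: "real^3 \<Rightarrow> ennreal"
  assumes "i \<le> m" and [measurable]: "w \<in> borel_measurable borel"
    and g: "(\<lambda>z. g (fst z) (snd z)) \<in> borel_measurable (config_measure m)"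
  shows "(\<lambda>z. w (snd z i) * g (fst z + snd z i) (del m i (snd z))) \<in> borel_measurable (config_measure (Suc m))"
proof (rule measurable_emission[OF assms(1)])
  have [measurable]: "(\<lambda>x. g (fst (snd x)) (snd (snd x))) \<in> borel_measurable (lborel \<Otimes>\<^sub>M config_measure m)"
    using measurable_compose[OF measurable_snd[of lborel] g] by simp
  show "(\<lambda>x. w (fst x) * g (fst (snd x)) (snd (snd x))) \<in> borel_measurable (lborel \<Otimes>\<^sub>M config_measure m)"
    by measurable
qed

lemma nn_integral_emission:
  fixes w :: "real^3 \<Rightarrow> ennreal"
  assumes "i \<le> m" and [measurable]: "w \<in> borel_measurable borel"
    and g: "(\<lambda>z. g (fst z) (snd z)) \<in> borel_measurable (config_measure m)"
  shows "(\<integral>\<^sup>+z. w (snd z i) * g (fst z + snd z i) (del m i (snd z)) \<partial>config_measure (Suc m))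
    = (\<integral>\<^sup>+k. w k \<partial>lborel) * (\<integral>\<^sup>+z. g (fst z) (snd z) \<partial>config_measure m)"
proof -
  have [measurable]: "(\<lambda>x. g (fst (snd x)) (snd (snd x))) \<in> borel_measurable (lborel \<Otimes>\<^sub>M config_measure m)"
    using measurable_compose[OF measurable_snd[of lborel] g] by simp
  have "(\<integral>\<^sup>+z. w (snd z i) * g (fst z + snd z i) (del m i (snd z)) \<partial>config_measure (Suc m))
      = (\<integral>\<^sup>+k. \<integral>\<^sup>+z. w k * g (fst z) (snd z) \<partial>config_measure m \<partial>lborel)"
    by (rule nn_integral_config_shift[OF assms(1)]) measurable
  also have "\<dots> = (\<integral>\<^sup>+k. w k * (\<integral>\<^sup>+z. g (fst z) (snd z) \<partial>config_measure m) \<partial>lborel)"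
    using g by (intro nn_integral_cong nn_integral_cmult) simp
  also have "\<dots> = (\<integral>\<^sup>+k. w k \<partial>lborel) * (\<integral>\<^sup>+z. g (fst z) (snd z) \<partial>config_measure m)"
    by (rule nn_integral_multc) simp
  finally show ?thesis .
qed

section \<open>Sums over a sector\<close>

lemma sector_sum_mono:
  assumes "\<And>\<sigma> L P K. \<sigma> \<in> {1,2} \<Longrightarrow> L \<in> labels m \<Longrightarrow> f \<sigma> L P K \<le> g \<sigma> L P K"
  shows "sector_sum m f \<le> sector_sum m g"
  unfolding sector_sum_def using assms by (intro sum_mono nn_integral_mono) auto

lemma sector_sum_cmult_sum:
  assumes "finite I"
    and "\<And>i \<sigma> L. i \<in> I \<Longrightarrow> \<sigma> \<in> {1,2} \<Longrightarrow> L \<in> labels m \<Longrightarrow>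
      (\<lambda>z. f i \<sigma> L (fst z) (snd z)) \<in> borel_measurable (config_measure m)"
  shows "sector_sum m (\<lambda>\<sigma> L P K. c * (\<Sum>i\<in>I. f i \<sigma> L P K)) = c * (\<Sum>i\<in>I. sector_sum m (f i))"
proof -
  have "sector_sum m (\<lambda>\<sigma> L P K. c * (\<Sum>i\<in>I. f i \<sigma> L P K))
      = (\<Sum>\<sigma>\<in>{1,2::nat}. \<Sum>L\<in>labels m. c * (\<Sum>i\<in>I. \<integral>\<^sup>+z. f i \<sigma> L (fst z) (snd z) \<partial>config_measure m))"
    unfolding sector_sum_def using assms
    by (intro sum.cong refl) (simp add: nn_integral_cmult nn_integral_sum borel_measurable_sum)
  also have "\<dots> = c * (\<Sum>i\<in>I. sector_sum m (f i))"
    unfolding sector_sum_def sum_distrib_left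
    by (subst sum.swap, rule sum.cong, simp, rule sum.swap)
  finally show ?thesis .
qed

lemma sector_sum_emission:
  fixes w :: "real^3 \<Rightarrow> ennreal"
  assumes "i \<le> m" and "w \<in> borel_measurable borel"
    and g: "\<And>\<sigma> L. \<sigma> \<in> {1,2} \<Longrightarrow> L \<in> labels m \<Longrightarrow>
      (\<lambda>z. g \<sigma> L (fst z) (snd z)) \<in> borel_measurable (config_measure m)"
  shows "sector_sum (Suc m) (\<lambda>\<sigma> L P K. w (K i) * g \<sigma> (del m i L) (P + K i) (del m i K))
    = 2 * (\<integral>\<^sup>+k. w k \<partial>lborel) * sector_sum m g"
proof -
  have "sector_sum (Suc m) (\<lambda>\<sigma> L P K. w (K i) * g \<sigma> (del m i L) (P + K i) (del m i K))
      = (\<Sum>\<sigma>\<in>{1,2::nat}. \<Sum>L\<in>labels (Suc m).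
          (\<integral>\<^sup>+k. w k \<partial>lborel) * (\<integral>\<^sup>+z. g \<sigma> (del m i L) (fst z) (snd z) \<partial>config_measure m))"
    unfolding sector_sum_def
    by (intro sum.cong refl nn_integral_emission assms(1,2) g del_labels) auto
  also have "\<dots> = (\<Sum>\<sigma>\<in>{1,2::nat}. 2 * (\<Sum>L\<in>labels m.
          (\<integral>\<^sup>+k. w k \<partial>lborel) * (\<integral>\<^sup>+z. g \<sigma> L (fst z) (snd z) \<partial>config_measure m)))"
    by (rule sum.cong[OF refl], rule sum_labels_del[OF assms(1)])
  also have "\<dots> = 2 * (\<integral>\<^sup>+k. w k \<partial>lborel) * sector_sum m g"
    unfolding sector_sum_def by (simp only: sum_distrib_left mult.assoc)
  finally show ?thesis .
qed

lemma sector_sum_pD_star_le: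
  assumes pol: "polarization \<epsilon>" and \<psi>: "m_photon_state m \<psi>"
  shows "sector_sum (Suc m) (\<lambda>\<sigma> L P K. ennreal ((cmod (pD_star \<epsilon> \<Lambda> m \<psi> \<sigma> L P K))\<^sup>2
            / ((norm P)\<^sup>2 + (\<Sum>i<Suc m. norm (K i)))))
    \<le> 2 * (\<integral>\<^sup>+k. ennreal (cutoff_inverse_square \<Lambda> k) \<partial>lborel)
        * sector_sum m (\<lambda>\<sigma> L P K. ennreal ((norm P)\<^sup>2 * (cmod (\<psi> \<sigma> L P K))\<^sup>2))"
    (is "?lhs \<le> 2 * ?W * sector_sum m ?g")
proof -
  let ?w = "\<lambda>k. ennreal (cutoff_inverse_square \<Lambda> k)"
  define T where "T i \<sigma> L P K = ?w (K i) * ?g \<sigma> (del m i L) (P + K i) (del m i K)" for i \<sigma> L P K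
  have w_measurable: "?w \<in> borel_measurable borel"
    by measurable
  have g_measurable: "(\<lambda>z. ?g \<sigma> L (fst z) (snd z)) \<in> borel_measurable (config_measure m)"
    if "\<sigma> \<in> {1,2}" and "L \<in> labels m" for \<sigma> L
  proof -
    have [measurable]: "(\<lambda>z. \<psi> \<sigma> L (fst z) (snd z)) \<in> borel_measurable (lborel \<Otimes>\<^sub>M photon_space m)"
      using \<psi> that by (auto simp: m_photon_state_def config_measure_def)
    show ?thesis
      unfolding config_measure_def by measurable
  qed
  have "?lhs \<le> sector_sum (Suc m) (\<lambda>\<sigma> L P K. ennreal (1 / real (Suc m)) * (\<Sum>i<Suc m. T i \<sigma> L P K))"
    unfolding T_def by (rule sector_sum_mono, rule ennreal_pD_star_squared_div_le[OF pol])
  also have "\<dots> = ennreal (1 / real (Suc m)) * (\<Sum>i<Suc m. sector_sum (Suc m) (T i))"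
    unfolding T_def
    by (intro sector_sum_cmult_sum measurable_emission_mult w_measurable g_measurable del_labels) auto
  also have "\<dots> = ennreal (1 / real (Suc m)) * (\<Sum>i<Suc m. 2 * ?W * sector_sum m ?g)"
    unfolding T_def
    by (intro arg_cong2[where f = times] sum.cong refl sector_sum_emission w_measurable g_measurable) auto
  also have "\<dots> = (ennreal (1 / real (Suc m)) * of_nat (Suc m)) * (2 * ?W * sector_sum m ?g)"
    by (simp add: mult.assoc del: of_nat_Suc)
  also have "ennreal (1 / real (Suc m)) * of_nat (Suc m) = 1"
    by (simp add: ennreal_of_nat_eq_real_of_nat ennreal_mult[symmetric] del: of_nat_Suc)
  finally show ?thesis
    by simp
qed

theorem mainTheorem5:
  shows "\<exists>C::real. C > 0 \<and>
    (\<forall>(\<epsilon> :: nat \<Rightarrow> real^3 \<Rightarrow> real^3) (m::nat) (\<Lambda>::real) (\<psi>::state).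
      polarization \<epsilon> \<longrightarrow> \<Lambda> > 0 \<longrightarrow> m_photon_state m \<psi> \<longrightarrow>
      sector_sum m (\<lambda>\<sigma> L P K. ennreal ((norm P)\<^sup>2 * (cmod (\<psi> \<sigma> L P K))\<^sup>2)) < \<infinity> \<longrightarrow>
      sector_sum m (\<lambda>\<sigma> L P K. ennreal ((\<Sum>i<m. norm (K i)) * (cmod (\<psi> \<sigma> L P K))\<^sup>2)) < \<infinity> \<longrightarrow>
      sector_sum (Suc m) (\<lambda>\<sigma> L P K. ennreal ((cmod (pD_star \<epsilon> \<Lambda> m \<psi> \<sigma> L P K))\<^sup>2
                                      / ((norm P)\<^sup>2 + (\<Sum>i<Suc m. norm (K i)))))
      \<le> ennreal (C * \<Lambda>) *
         (sector_sum m (\<lambda>\<sigma> L P K. ennreal ((norm P)\<^sup>2 * (cmod (\<psi> \<sigma> L P K))\<^sup>2)) +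
          sector_sum m (\<lambda>\<sigma> L P K. ennreal ((\<Sum>i<m. norm (K i)) * (cmod (\<psi> \<sigma> L P K))\<^sup>2))))"
proof (intro exI[of _ 432] conjI allI impI)
  fix \<epsilon> :: "nat \<Rightarrow> real^3 \<Rightarrow> real^3" and m :: nat and \<Lambda> :: real and \<psi> :: state
  assume pol: "polarization \<epsilon>" and \<Lambda>: "\<Lambda> > 0" and \<psi>: "m_photon_state m \<psi>"
  let ?kinetic = "sector_sum m (\<lambda>\<sigma> L P K. ennreal ((norm P)\<^sup>2 * (cmod (\<psi> \<sigma> L P K))\<^sup>2))"
  let ?field = "sector_sum m (\<lambda>\<sigma> L P K. ennreal ((\<Sum>i<m. norm (K i)) * (cmod (\<psi> \<sigma> L P K))\<^sup>2))"
  have "sector_sum (Suc m) (\<lambda>\<sigma> L P K. ennreal ((cmod (pD_star \<epsilon> \<Lambda> m \<psi> \<sigma> L P K))\<^sup>2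
      / ((norm P)\<^sup>2 + (\<Sum>i<Suc m. norm (K i)))))
      \<le> 2 * (\<integral>\<^sup>+k. ennreal (cutoff_inverse_square \<Lambda> k) \<partial>lborel) * ?kinetic"
    by (rule sector_sum_pD_star_le[OF pol \<psi>])
  also have "\<dots> \<le> 2 * ennreal (216 * \<Lambda>) * ?kinetic"
    using nn_integral_cutoff_inverse_square_le[OF \<Lambda>] by (intro mult_right_mono mult_left_mono) auto
  also have "2 * ennreal (216 * \<Lambda>) = ennreal (432 * \<Lambda>)"
    using \<Lambda> ennreal_mult[of 2 "216 * \<Lambda>"] by simp
  also have "ennreal (432 * \<Lambda>) * ?kinetic \<le> ennreal (432 * \<Lambda>) * (?kinetic + ?field)"
    by (intro mult_left_mono) auto
  finally show "sector_sum (Suc m) (\<lambda>\<sigma> L P K. ennreal ((cmod (pD_star \<epsilon> \<Lambda> m \<psi> \<sigma> L P K))\<^sup>2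
      / ((norm P)\<^sup>2 + (\<Sum>i<Suc m. norm (K i))))) \<le> ennreal (432 * \<Lambda>) * (?kinetic + ?field)" .
qed simp

end
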